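(* Let $T^+=\mathbb{Z}^+$ or $\mathbb{R}^+$ act on a compact metrizable space $X$ by continuous surjections $\alpha^t$. Then the adherence semigroup $\mathcal A^+$ contains the kernel $\mathcal M^+$ of $E^+$.
   Context: $\alpha^{s+t}=\alpha^s\circ\alpha^t$, $\alpha^0=\mathrm{id}$. $E^+=E(X,T^+)$ is the closure of $\{\alpha^t:t\in T^+\}$ in $X^X$ (pointwise convergence topology, composition); its kernel $\mathcal M^+$ is its unique minimal two-sided ideal. $\mathcal A^+$ is the set of elements of $E^+$ that are pointwise limits of nets $(\alpha^{t_\nu})$ with $\lim t_\nu=+\infty$ (equivalently $\bigcap_{t\in T^+}\alpha^tE^+$). *)

theory Defs
  imports "HOL-Analysis.Analysis"
begin

text \<open>Maps X \<rightarrow> X are represented extensionally (value undefined outside X),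
  i.e. as elements of PiE X (\<lambda>_. X).  X^X carries the topology of pointwise
  convergence (product topology).\<close>

definition ptwise_top :: "'a::metric_space set \<Rightarrow> ('a \<Rightarrow> 'a) topology" where
  "ptwise_top X = product_topology (\<lambda>_. subtopology euclidean X) X"

definition ecomp :: "'a set \<Rightarrow> ('a \<Rightarrow> 'a) \<Rightarrow> ('a \<Rightarrow> 'a) \<Rightarrow> ('a \<Rightarrow> 'a)" where
  "ecomp X f g = restrict (f \<circ> g) X"

definition envelope :: "'a::metric_space set \<Rightarrow> real set \<Rightarrow> (real \<Rightarrow> 'a \<Rightarrow> 'a) \<Rightarrow> ('a \<Rightarrow> 'a) set" where
  "envelope X T \<alpha> = (ptwise_top X) closure_of ((\<lambda>t. restrict (\<alpha> t) X) ` T)"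

definition is_ideal :: "'a set \<Rightarrow> ('a \<Rightarrow> 'a) set \<Rightarrow> ('a \<Rightarrow> 'a) set \<Rightarrow> bool" where
  "is_ideal X S I \<longleftrightarrow> I \<subseteq> S \<and> I \<noteq> {} \<and>
     (\<forall>f\<in>S. \<forall>g\<in>I. ecomp X f g \<in> I \<and> ecomp X g f \<in> I)"

definition is_minimal_ideal :: "'a set \<Rightarrow> ('a \<Rightarrow> 'a) set \<Rightarrow> ('a \<Rightarrow> 'a) set \<Rightarrow> bool" where
  "is_minimal_ideal X S I \<longleftrightarrow> is_ideal X S I \<and> (\<forall>J. is_ideal X S J \<and> J \<subseteq> I \<longrightarrow> J = I)"

definition kernel :: "'a set \<Rightarrow> ('a \<Rightarrow> 'a) set \<Rightarrow> ('a \<Rightarrow> 'a) set" where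
  "kernel X S = (THE I. is_minimal_ideal X S I)"

text \<open>Adherence semigroup: elements of E^+ that are limits of nets (alpha^{t_nu})
  with t_nu \<rightarrow> +\<infinity>, i.e. every neighbourhood of f contains alpha^t for
  arbitrarily large t in T^+.\<close>
definition adherence :: "'a::metric_space set \<Rightarrow> real set \<Rightarrow> (real \<Rightarrow> 'a \<Rightarrow> 'a) \<Rightarrow> ('a \<Rightarrow> 'a) set" where
  "adherence X T \<alpha> = {f \<in> envelope X T \<alpha>.
     \<forall>U. openin (ptwise_top X) U \<and> f \<in> U \<longrightarrow>
        (\<forall>s. \<exists>t\<in>T. t \<ge> s \<and> restrict (\<alpha> t) X \<in> U)}"

end

theory Submission
  imports Defs
begin

text \<open>Write \<open>C\<^sub>s\<close> for the closure of \<open>{\<alpha>\<^sup>t : t \<ge> s}\<close> in \<open>X\<^sup>X\<close>. Then \<open>\<A>\<^sup>+\<close> is the intersection of the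
  decreasing family of nonempty closed sets \<open>C\<^sub>s\<close>, so it is nonempty by compactness. Left
  multiplication by \<open>\<alpha>\<^sup>t\<close> and right multiplication by anything are continuous, and
  \<open>\<alpha>\<^sup>t C\<^sub>s \<union> C\<^sub>s \<alpha>\<^sup>t \<subseteq> C\<^sub>s\<close>; passing to closures gives \<open>E\<^sup>+ C\<^sub>s \<union> C\<^sub>s E\<^sup>+ \<subseteq> C\<^sub>s\<close>, so \<open>\<A>\<^sup>+\<close> is an ideal of \<open>E\<^sup>+\<close>.

  On the other hand \<open>E\<^sup>+\<close> is a compact semigroup with continuous right multiplications. By
  Zorn's lemma it has a minimal closed left ideal \<open>L\<close>, and \<open>L = E\<^sup>+ h\<close> for every \<open>h \<in> L\<close>. Given
  any ideal \<open>J\<close>, choosing \<open>h \<in> J L\<close> shows \<open>L \<subseteq> J\<close>. Hence the intersection of all ideals is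
  nonempty, is the unique minimal ideal \<open>\<M>\<^sup>+\<close>, and lies in \<open>\<A>\<^sup>+\<close>.\<close>

lemma topspace_ptwise_top: "topspace (ptwise_top X) = (\<Pi>\<^sub>E x\<in>X. X)"
  by (simp add: ptwise_top_def)

lemma compact_space_ptwise_top: "compact X \<Longrightarrow> compact_space (ptwise_top X)"
  unfolding ptwise_top_def compact_space_product_topology
  by (auto intro: compact_space_subtopology)

lemma Hausdorff_space_ptwise_top: "Hausdorff_space (ptwise_top X)"
  unfolding ptwise_top_def Hausdorff_space_product_topology
  by (auto intro: Hausdorff_space_subtopology)

lemma ecomp_assoc:
  "h \<in> (\<Pi>\<^sub>E x\<in>X. X) \<Longrightarrow> ecomp X f (ecomp X g h) = ecomp X (ecomp X f g) h"
  by (auto simp: ecomp_def fun_eq_iff PiE_def Pi_def)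

lemma continuous_map_ecomp_right:
  assumes "f \<in> (\<Pi>\<^sub>E x\<in>X. X)"
  shows "continuous_map (ptwise_top X) (ptwise_top X) (\<lambda>g. ecomp X g f)"
  unfolding ptwise_top_def continuous_map_componentwise
proof (intro conjI ballI)
  fix x assume "x \<in> X"
  then have "continuous_map (product_topology (\<lambda>_. top_of_set X) X) (top_of_set X) (\<lambda>g. g (f x))"
    using assms by (intro continuous_map_product_projection) auto
  with \<open>x \<in> X\<close> show "continuous_map (product_topology (\<lambda>_. top_of_set X) X) (top_of_set X)
      (\<lambda>g. ecomp X g f x)"
    by (simp add: ecomp_def)
qed (auto simp: ecomp_def)

lemma continuous_map_ecomp_left:
  assumes "continuous_on X h" "h ` X \<subseteq> X"
  shows "continuous_map (ptwise_top X) (ptwise_top X) (ecomp X (restrict h X))"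
  unfolding ptwise_top_def continuous_map_componentwise
proof (intro conjI ballI)
  fix x assume "x \<in> X"
  have proj: "continuous_map (product_topology (\<lambda>_. top_of_set X) X) (top_of_set X) (\<lambda>g. g x)"
    using \<open>x \<in> X\<close> by (intro continuous_map_product_projection)
  have "continuous_map (top_of_set X) (top_of_set X) h"
    using assms by (intro continuous_map_into_subtopology) auto
  from continuous_map_compose[OF proj this]
  have "continuous_map (product_topology (\<lambda>_. top_of_set X) X) (top_of_set X) (\<lambda>g. h (g x))"
    by (simp add: o_def)
  then show "continuous_map (product_topology (\<lambda>_. top_of_set X) X) (top_of_set X)
      (\<lambda>g. ecomp X (restrict h X) g x)"
    by (rule continuous_map_eq) (use \<open>x \<in> X\<close> in \<open>auto simp: ecomp_def PiE_def Pi_def\<close>)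
qed (auto simp: ecomp_def)

text \<open>Only left multiplication by the elements of \<open>A\<close> is assumed continuous; right multiplication
  is always continuous for the pointwise topology.\<close>
lemma ecomp_closure_of_closure_of:
  assumes left_cont: "\<And>a. a \<in> A \<Longrightarrow> continuous_map (ptwise_top X) (ptwise_top X) (ecomp X a)"
    and AB: "\<And>a b. a \<in> A \<Longrightarrow> b \<in> B \<Longrightarrow> ecomp X a b \<in> D"
    and D: "closedin (ptwise_top X) D"
    and f: "f \<in> ptwise_top X closure_of A" and g: "g \<in> ptwise_top X closure_of B"
  shows "ecomp X f g \<in> D"
proof -
  have "ecomp X a g \<in> D" if "a \<in> A" for a
  proof -
    have "ecomp X a ` (ptwise_top X closure_of B) \<subseteq> ptwise_top X closure_of (ecomp X a ` B)"
      by (rule continuous_map_image_closure_subset[OF left_cont[OF that]])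
    also have "\<dots> \<subseteq> D"
      using AB that D by (intro closure_of_minimal) auto
    finally show ?thesis using g by blast
  qed
  then have "(\<lambda>h. ecomp X h g) ` A \<subseteq> D"
    by blast
  moreover have "g \<in> (\<Pi>\<^sub>E x\<in>X. X)"
    using g closure_of_subset_topspace by (metis topspace_ptwise_top subsetD)
  then have "(\<lambda>h. ecomp X h g) ` (ptwise_top X closure_of A)
      \<subseteq> ptwise_top X closure_of ((\<lambda>h. ecomp X h g) ` A)"
    by (intro continuous_map_image_closure_subset continuous_map_ecomp_right)
  ultimately have "(\<lambda>h. ecomp X h g) ` (ptwise_top X closure_of A) \<subseteq> D"
    using D by (meson closure_of_minimal order_trans)
  then show ?thesis
    using f by blast
qed

lemma subset_Zorn_minimal:
  assumes "F \<noteq> {}" and "\<And>C. subset.chain F C \<Longrightarrow> C \<noteq> {} \<Longrightarrow> \<exists>L\<in>F. \<forall>A\<in>C. L \<subseteq> A"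
  shows "\<exists>M\<in>F. \<forall>A\<in>F. A \<subseteq> M \<longrightarrow> A = M"
proof -
  have "\<exists>N\<in>uminus ` F. \<forall>B\<in>uminus ` F. N \<subseteq> B \<longrightarrow> B = N"
  proof (rule subset_Zorn)
    fix C assume C: "subset.chain (uminus ` F) C"
    show "\<exists>U\<in>uminus ` F. \<forall>B\<in>C. B \<subseteq> U"
    proof (cases "C = {}")
      case True
      then show ?thesis using assms(1) by blast
    next
      case False
      have "subset.chain F (uminus ` C)"
        using C unfolding subset_chain_def by (auto simp: image_subset_iff)
      then obtain L where "L \<in> F" and L: "\<And>B. B \<in> C \<Longrightarrow> L \<subseteq> - B"
        using assms(2) False by (metis image_is_empty imageI)
      have "B \<subseteq> - L" if "B \<in> C" for B
        using L[OF that] by blast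
      then show ?thesis
        using \<open>L \<in> F\<close> by blast
    qed
  qed
  then obtain N where N: "N \<in> uminus ` F" "\<forall>B\<in>uminus ` F. N \<subseteq> B \<longrightarrow> B = N" ..
  then obtain M where "M \<in> F" "N = - M"
    by blast
  have "A = M" if "A \<in> F" "A \<subseteq> M" for A
  proof -
    have "- A = N"
      using N(2) \<open>N = - M\<close> that by blast
    then show ?thesis
      using \<open>N = - M\<close> by simp
  qed
  then show ?thesis
    using \<open>M \<in> F\<close> by blast
qed

lemma compact_space_Inter_chain_nonempty:
  assumes "compact_space P" "subset.chain F C" "C \<noteq> {}"
    and "\<And>A. A \<in> C \<Longrightarrow> closedin P A \<and> A \<noteq> {}"
  shows "\<Inter>C \<noteq> {}"
proof -
  have "\<Inter>G \<noteq> {}" if "finite G" "G \<subseteq> C" for G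
  proof (cases "G = {}")
    case False
    have "subset.chain G G"
      using assms(2) that(2) unfolding subset_chain_def by blast
    then have "\<Inter>G \<in> G"
      using Inter_in_chain that(1) False by blast
    then show ?thesis
      using assms(4) that(2) by blast
  qed simp
  moreover have "\<forall>A\<in>C. closedin P A"
    using assms(4) by blast
  ultimately show ?thesis
    using assms(1)[unfolded compact_space_fip, THEN spec[of _ C]] by blast
qed

definition is_left_ideal :: "'a set \<Rightarrow> ('a \<Rightarrow> 'a) set \<Rightarrow> ('a \<Rightarrow> 'a) set \<Rightarrow> bool" where
  "is_left_ideal X S L \<longleftrightarrow> L \<subseteq> S \<and> L \<noteq> {} \<and> (\<forall>f\<in>S. \<forall>g\<in>L. ecomp X f g \<in> L)"

locale compact_ptwise_semigroup =
  fixes X :: "'a::metric_space set" and S :: "('a \<Rightarrow> 'a) set"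
  assumes compact: "compact X"
    and closedin: "closedin (ptwise_top X) S"
    and nonempty: "S \<noteq> {}"
    and ecomp_closed: "\<And>f g. f \<in> S \<Longrightarrow> g \<in> S \<Longrightarrow> ecomp X f g \<in> S"
begin

lemma subset_PiE: "S \<subseteq> (\<Pi>\<^sub>E x\<in>X. X)"
  using closedin_subset[OF closedin] by (simp add: topspace_ptwise_top)

lemma closedin_ecomp_image:
  assumes "h \<in> S"
  shows "closedin (ptwise_top X) ((\<lambda>f. ecomp X f h) ` S)"
proof -
  have "compactin (ptwise_top X) S"
    by (rule closedin_compact_space[OF compact_space_ptwise_top[OF compact] closedin])
  moreover have "h \<in> (\<Pi>\<^sub>E x\<in>X. X)"
    using assms subset_PiE by blast
  ultimately have "compactin (ptwise_top X) ((\<lambda>f. ecomp X f h) ` S)"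
    by (rule image_compactin[OF _ continuous_map_ecomp_right])
  then show ?thesis
    by (rule compactin_imp_closedin[OF Hausdorff_space_ptwise_top])
qed

lemma is_left_ideal_ecomp_image:
  assumes "h \<in> S"
  shows "is_left_ideal X S ((\<lambda>f. ecomp X f h) ` S)"
  unfolding is_left_ideal_def
proof (intro conjI ballI)
  fix f g assume "f \<in> S" "g \<in> (\<lambda>f. ecomp X f h) ` S"
  then obtain k where "k \<in> S" "g = ecomp X k h"
    by blast
  moreover have "h \<in> (\<Pi>\<^sub>E x\<in>X. X)"
    using assms subset_PiE by blast
  ultimately have "ecomp X f g = ecomp X (ecomp X f k) h"
    by (simp add: ecomp_assoc)
  then show "ecomp X f g \<in> (\<lambda>f. ecomp X f h) ` S"
    using ecomp_closed[OF \<open>f \<in> S\<close> \<open>k \<in> S\<close>] by blast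
qed (use assms ecomp_closed nonempty in auto)

lemma minimal_closed_left_ideal_exists:
  obtains L where "closedin (ptwise_top X) L" "is_left_ideal X S L"
    "\<And>L'. closedin (ptwise_top X) L' \<Longrightarrow> is_left_ideal X S L' \<Longrightarrow> L' \<subseteq> L \<Longrightarrow> L' = L"
proof -
  let ?F = "{L. closedin (ptwise_top X) L \<and> is_left_ideal X S L}"
  have "\<exists>M\<in>?F. \<forall>A\<in>?F. A \<subseteq> M \<longrightarrow> A = M"
  proof (rule subset_Zorn_minimal)
    show "?F \<noteq> {}"
      using closedin nonempty ecomp_closed by (auto simp: is_left_ideal_def)
  next
    fix C assume C: "subset.chain ?F C" "C \<noteq> {}"
    then have members: "closedin (ptwise_top X) A \<and> is_left_ideal X S A" if "A \<in> C" for A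
      using that by (auto simp: subset_chain_def)
    obtain A where "A \<in> C"
      using C(2) by blast
    then have "\<Inter>C \<subseteq> S"
      using members[OF \<open>A \<in> C\<close>] Inter_lower[OF \<open>A \<in> C\<close>] by (auto simp: is_left_ideal_def)
    moreover have "\<Inter>C \<noteq> {}"
      by (rule compact_space_Inter_chain_nonempty[OF compact_space_ptwise_top[OF compact] C])
        (use members in \<open>auto simp: is_left_ideal_def\<close>)
    moreover have "closedin (ptwise_top X) (\<Inter>C)"
      using C(2) members by (intro closedin_Inter) auto
    ultimately have "\<Inter>C \<in> ?F"
      using members by (auto simp: is_left_ideal_def)
    then show "\<exists>L\<in>?F. \<forall>A\<in>C. L \<subseteq> A"
      by blast
  qed
  then obtain L where "L \<in> ?F" and min: "\<forall>A\<in>?F. A \<subseteq> L \<longrightarrow> A = L" ..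
  show thesis
  proof (rule that)
    show "closedin (ptwise_top X) L" "is_left_ideal X S L"
      using \<open>L \<in> ?F\<close> by simp_all
    fix L' assume "closedin (ptwise_top X) L'" "is_left_ideal X S L'" "L' \<subseteq> L"
    then show "L' = L"
      using min by simp
  qed
qed

lemma minimal_closed_left_ideal_subset_ideal:
  assumes L: "is_left_ideal X S L"
    and min: "\<And>L'. closedin (ptwise_top X) L' \<Longrightarrow> is_left_ideal X S L' \<Longrightarrow> L' \<subseteq> L \<Longrightarrow> L' = L"
    and J: "is_ideal X S J"
  shows "L \<subseteq> J"
proof -
  obtain j l where "j \<in> J" "l \<in> L"
    using J L by (auto simp: is_ideal_def is_left_ideal_def)
  define h where "h = ecomp X j l"
  have "h \<in> L" "h \<in> J" "h \<in> S"
    using \<open>j \<in> J\<close> \<open>l \<in> L\<close> J L by (auto simp: h_def is_ideal_def is_left_ideal_def)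
  have "(\<lambda>f. ecomp X f h) ` S \<subseteq> L"
    using L \<open>h \<in> L\<close> by (auto simp: is_left_ideal_def)
  then have "(\<lambda>f. ecomp X f h) ` S = L"
    by (rule min[OF closedin_ecomp_image[OF \<open>h \<in> S\<close>] is_left_ideal_ecomp_image[OF \<open>h \<in> S\<close>]])
  moreover have "(\<lambda>f. ecomp X f h) ` S \<subseteq> J"
    using J \<open>h \<in> J\<close> by (auto simp: is_ideal_def)
  ultimately show ?thesis
    by blast
qed

lemma is_ideal_Inter_ideals: "is_ideal X S (\<Inter>{J. is_ideal X S J})"
proof -
  let ?K = "\<Inter>{J. is_ideal X S J}"
  have "is_ideal X S S"
    using nonempty ecomp_closed by (auto simp: is_ideal_def)
  then have "?K \<subseteq> S"
    by blast
  obtain L where L: "is_left_ideal X S L"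
    and min: "\<And>L'. closedin (ptwise_top X) L' \<Longrightarrow> is_left_ideal X S L' \<Longrightarrow> L' \<subseteq> L \<Longrightarrow> L' = L"
    by (metis minimal_closed_left_ideal_exists)
  have "L \<subseteq> ?K"
    using minimal_closed_left_ideal_subset_ideal[OF L min] by blast
  moreover have "L \<noteq> {}"
    using L by (simp add: is_left_ideal_def)
  ultimately have "?K \<noteq> {}"
    by blast
  moreover have "ecomp X f g \<in> ?K \<and> ecomp X g f \<in> ?K" if "f \<in> S" "g \<in> ?K" for f g
  proof -
    have "ecomp X f g \<in> J \<and> ecomp X g f \<in> J" if "is_ideal X S J" for J
      using that \<open>f \<in> S\<close> \<open>g \<in> ?K\<close> unfolding is_ideal_def by blast
    then show ?thesis
      by blast
  qed
  ultimately show ?thesis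
    using \<open>?K \<subseteq> S\<close> unfolding is_ideal_def[of X S ?K] by blast
qed

lemma kernel_eq_Inter_ideals: "kernel X S = \<Inter>{J. is_ideal X S J}"
  unfolding kernel_def
proof (rule the_equality)
  show "is_minimal_ideal X S (\<Inter>{J. is_ideal X S J})"
    unfolding is_minimal_ideal_def using is_ideal_Inter_ideals by blast
next
  fix I assume "is_minimal_ideal X S I"
  then have "is_ideal X S I" and "\<And>J. is_ideal X S J \<Longrightarrow> J \<subseteq> I \<Longrightarrow> J = I"
    unfolding is_minimal_ideal_def by blast+
  moreover have "\<Inter>{J. is_ideal X S J} \<subseteq> I"
    using \<open>is_ideal X S I\<close> by blast
  ultimately show "I = \<Inter>{J. is_ideal X S J}"
    using is_ideal_Inter_ideals by blast
qed

lemma kernel_subset_ideal: "is_ideal X S J \<Longrightarrow> kernel X S \<subseteq> J"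
  by (auto simp: kernel_eq_Inter_ideals)

end

locale semiflow =
  fixes X :: "'a::metric_space set" and T :: "real set" and \<alpha> :: "real \<Rightarrow> 'a \<Rightarrow> 'a"
  assumes compact: "compact X"
    and times_nonneg: "T \<subseteq> {0..}"
    and times_add: "\<And>s t. s \<in> T \<Longrightarrow> t \<in> T \<Longrightarrow> s + t \<in> T"
    and times_unbounded: "\<And>s. \<exists>t\<in>T. s \<le> t"
    and continuous: "\<And>t. t \<in> T \<Longrightarrow> continuous_on X (\<alpha> t)"
    and maps_into: "\<And>t. t \<in> T \<Longrightarrow> \<alpha> t ` X \<subseteq> X"
    and flow_add: "\<And>s t x. s \<in> T \<Longrightarrow> t \<in> T \<Longrightarrow> x \<in> X \<Longrightarrow> \<alpha> (s + t) x = \<alpha> s (\<alpha> t x)"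
begin

abbreviation flow :: "real \<Rightarrow> 'a \<Rightarrow> 'a" where
  "flow t \<equiv> restrict (\<alpha> t) X"

definition tail :: "real \<Rightarrow> ('a \<Rightarrow> 'a) set" where
  "tail s = ptwise_top X closure_of (flow ` {t \<in> T. s \<le> t})"

lemma closedin_tail: "closedin (ptwise_top X) (tail s)"
  by (simp add: tail_def)

lemma tail_antimono: "s \<le> s' \<Longrightarrow> tail s' \<subseteq> tail s"
  unfolding tail_def by (intro closure_of_mono) auto

lemma flow_in_tail: "t \<in> T \<Longrightarrow> s \<le> t \<Longrightarrow> flow t \<in> tail s"
  unfolding tail_def using maps_into
  by (intro closure_of_subset[THEN subsetD]) (auto simp: topspace_ptwise_top image_subset_iff)

lemma tail_nonempty: "tail s \<noteq> {}"
  using times_unbounded flow_in_tail by blast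

lemma envelope_eq_tail: "envelope X T \<alpha> = tail 0"
proof -
  have "{t \<in> T. 0 \<le> t} = T"
    using times_nonneg by auto
  then show ?thesis
    by (simp add: envelope_def tail_def)
qed

lemma ecomp_flow: "s \<in> T \<Longrightarrow> t \<in> T \<Longrightarrow> ecomp X (flow s) (flow t) = flow (s + t)"
  using maps_into flow_add by (auto simp: ecomp_def fun_eq_iff)

lemma continuous_map_ecomp_flow:
  "t \<in> T \<Longrightarrow> continuous_map (ptwise_top X) (ptwise_top X) (ecomp X (flow t))"
  by (intro continuous_map_ecomp_left continuous maps_into)

lemma ecomp_envelope_tail:
  assumes "f \<in> envelope X T \<alpha>" "g \<in> tail s"
  shows "ecomp X f g \<in> tail s"
proof (rule ecomp_closure_of_closure_of[OF _ _ closedin_tail])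
  show "f \<in> ptwise_top X closure_of (flow ` T)"
    using assms(1) by (simp add: envelope_def)
  show "g \<in> ptwise_top X closure_of (flow ` {t \<in> T. s \<le> t})"
    using assms(2) by (simp add: tail_def)
  show "continuous_map (ptwise_top X) (ptwise_top X) (ecomp X a)" if "a \<in> flow ` T" for a
    using that continuous_map_ecomp_flow by blast
  fix a b assume "a \<in> flow ` T" "b \<in> flow ` {t \<in> T. s \<le> t}"
  then obtain u t where "u \<in> T" "t \<in> T" "s \<le> t" "a = flow u" "b = flow t"
    by blast
  moreover have "s \<le> u + t"
    using \<open>u \<in> T\<close> \<open>s \<le> t\<close> times_nonneg by force
  ultimately show "ecomp X a b \<in> tail s"
    by (simp add: ecomp_flow flow_in_tail times_add)
qed

lemma ecomp_tail_envelope: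
  assumes "f \<in> tail s" "g \<in> envelope X T \<alpha>"
  shows "ecomp X f g \<in> tail s"
proof (rule ecomp_closure_of_closure_of[OF _ _ closedin_tail])
  show "f \<in> ptwise_top X closure_of (flow ` {t \<in> T. s \<le> t})"
    using assms(1) by (simp add: tail_def)
  show "g \<in> ptwise_top X closure_of (flow ` T)"
    using assms(2) by (simp add: envelope_def)
  show "continuous_map (ptwise_top X) (ptwise_top X) (ecomp X a)"
    if "a \<in> flow ` {t \<in> T. s \<le> t}" for a
    using that continuous_map_ecomp_flow by blast
  fix a b assume "a \<in> flow ` {t \<in> T. s \<le> t}" "b \<in> flow ` T"
  then obtain t u where "t \<in> T" "s \<le> t" "u \<in> T" "a = flow t" "b = flow u"
    by blast
  moreover have "s \<le> t + u"
    using \<open>u \<in> T\<close> \<open>s \<le> t\<close> times_nonneg by force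
  ultimately show "ecomp X a b \<in> tail s"
    by (simp add: ecomp_flow flow_in_tail times_add)
qed

sublocale envelope: compact_ptwise_semigroup X "envelope X T \<alpha>"
proof
  show "closedin (ptwise_top X) (envelope X T \<alpha>)"
    by (simp add: envelope_eq_tail closedin_tail)
  show "envelope X T \<alpha> \<noteq> {}"
    by (simp add: envelope_eq_tail tail_nonempty)
  show "ecomp X f g \<in> envelope X T \<alpha>" if "f \<in> envelope X T \<alpha>" "g \<in> envelope X T \<alpha>" for f g
    using ecomp_envelope_tail[OF that(1)] that(2) by (simp add: envelope_eq_tail)
qed (rule compact)

lemma adherence_eq_Inter_tail: "adherence X T \<alpha> = (\<Inter>s. tail s)"
proof (intro set_eqI iffI)
  fix f assume f: "f \<in> adherence X T \<alpha>"
  then have "f \<in> tail 0"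
    by (simp add: adherence_def envelope_eq_tail)
  then have "f \<in> topspace (ptwise_top X)"
    unfolding tail_def using closure_of_subset_topspace by fast
  show "f \<in> (\<Inter>s. tail s)"
  proof (rule INT_I)
    fix s
    have "\<exists>g. g \<in> flow ` {t \<in> T. s \<le> t} \<and> g \<in> U"
      if "f \<in> U" "openin (ptwise_top X) U" for U
      using f that unfolding adherence_def by blast
    then show "f \<in> tail s"
      using \<open>f \<in> topspace (ptwise_top X)\<close> unfolding tail_def in_closure_of by blast
  qed
next
  fix f assume f: "f \<in> (\<Inter>s. tail s)"
  then have "f \<in> envelope X T \<alpha>"
    by (simp add: envelope_eq_tail)
  moreover have "\<exists>t\<in>T. s \<le> t \<and> flow t \<in> U"
    if "openin (ptwise_top X) U" "f \<in> U" for U s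
  proof -
    have "f \<in> tail s"
      using f by blast
    then show ?thesis
      using that unfolding tail_def in_closure_of by blast
  qed
  ultimately show "f \<in> adherence X T \<alpha>"
    unfolding adherence_def by blast
qed

lemma adherence_nonempty: "adherence X T \<alpha> \<noteq> {}"
proof -
  have "subset.chain (range tail) (range tail)"
    unfolding subset_chain_def by (metis nle_le tail_antimono rangeE subset_refl)
  then have "(\<Inter>s. tail s) \<noteq> {}"
    by (rule compact_space_Inter_chain_nonempty[OF compact_space_ptwise_top[OF compact]])
      (auto simp: closedin_tail tail_nonempty)
  then show ?thesis
    by (simp add: adherence_eq_Inter_tail)
qed

lemma is_ideal_adherence: "is_ideal X (envelope X T \<alpha>) (adherence X T \<alpha>)"
  using adherence_nonempty ecomp_envelope_tail ecomp_tail_envelope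
  by (auto simp: is_ideal_def adherence_eq_Inter_tail envelope_eq_tail)

end

theorem lemma4p3:
  fixes X :: "'a::metric_space set" and T :: "real set" and \<alpha> :: "real \<Rightarrow> 'a \<Rightarrow> 'a"
  assumes "compact X"
    and "T = range real \<or> T = {0..}"
    and "\<And>t. t \<in> T \<Longrightarrow> continuous_on X (\<alpha> t)"
    and "\<And>t. t \<in> T \<Longrightarrow> \<alpha> t ` X = X"
    and "\<And>x. x \<in> X \<Longrightarrow> \<alpha> 0 x = x"
    and "\<And>s t x. s \<in> T \<Longrightarrow> t \<in> T \<Longrightarrow> x \<in> X \<Longrightarrow> \<alpha> (s + t) x = \<alpha> s (\<alpha> t x)"
  shows "kernel X (envelope X T \<alpha>) \<subseteq> adherence X T \<alpha>"
proof -
  interpret semiflow X T \<alpha>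
  proof
    show "T \<subseteq> {0..}"
      using assms(2) by auto
    show "s + t \<in> T" if "s \<in> T" "t \<in> T" for s t
      using assms(2) that by (auto, metis of_nat_add rangeI)
    show "\<exists>t\<in>T. s \<le> t" for s
    proof -
      obtain n where "s \<le> real n"
        using real_arch_simple by blast
      then show ?thesis
        using assms(2) by auto
    qed
  qed (use assms(1,3,4,6) in auto)
  show ?thesis
    by (rule envelope.kernel_subset_ideal[OF is_ideal_adherence])
qed

end
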